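(* Let $$A=\bigoplus_{i\in I}B(H_{\mathrm{in},i}),\quad B=\bigoplus_{j\in J}B(H_{\mathrm{out},j}),\quad C=\bigoplus_{k\in K}B(K_{\mathrm{in},k}),\quad D=\bigoplus_{l\in L}B(K_{\mathrm{out},l}),$$ and let $\mathcal S:\underline{\mathrm{Hom}}(A,B)\to\underline{\mathrm{Hom}}(C,D)$ be a deterministic supermap. Then there exists a unital completely positive map $\mathcal N:A\to C$ such that, for every positive $\rho\in C$ with $\mathrm{Tr}(\rho)=1$, $$\mathcal S_*(1_D\boxtimes\rho)=1_B\boxtimes\mathcal N_*(\rho).$$ Here $\mathcal S_*$ and $\mathcal N_*$ are the duals of $\mathcal S$ and $\mathcal N$.
   Context: Throughout, all Hilbert spaces are finite-dimensional and nonzero, and all index sets are finite and nonempty. **Multimatrix algebras.** A finite-dimensional $C^*$-algebra is written as $A=\bigoplus_{i\in I}B(H_i)$, with elements $X=(X_i)_{i\in I}$. Its trace is $\mathrm{Tr}(X)=\sum_i\mathrm{Tr}(X_i)$, and $X\ge 0$ means every block is positive semidefinite. **The algebra $\underline{\mathrm{Hom}}$ and (TP).** For $A=\bigoplus_{i\in I}B(H_i)$ and $B=\bigoplus_{j\in J}B(K_j)$, set $$\underline{\mathrm{Hom}}(A,B):=\bigoplus_{(j,i)\in J\times I}B(K_j\otimes H_i).$$ An element $X\in\underline{\mathrm{Hom}}(A,B)$ satisfies **(TP)** if $\sum_{j\in J}\mathrm{Tr}_{K_j}(X_{ji})=1_{H_i}$ for every $i\in I$. These positive (TP) elements are exactly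 the Choi operators of the channels (CPTP maps) $A\to B$. **Notation.** For $\rho=(\rho_i)_i\in A$, write $1_B\boxtimes\rho:=(1_{K_j}\otimes\rho_i)_{(j,i)}\in\underline{\mathrm{Hom}}(A,B)$. **Deterministic supermaps.** A deterministic supermap is a completely positive linear map $\mathcal S:\underline{\mathrm{Hom}}(A,B)\to\underline{\mathrm{Hom}}(C,D)$ sending every positive element satisfying (TP) to an element satisfying (TP). **Duals.** For a linear map $\Phi:\mathcal A\to\mathcal B$ between such algebras, the dual $\Phi_*:\mathcal B\to\mathcal A$ is the unique linear map with $$\mathrm{Tr}(\Phi_*(y)\,x)=\mathrm{Tr}(y\,\Phi(x))\quad\text{for all } x\in\mathcal A,\ y\in\mathcal B.$$ If $\Phi$ is CP then $\Phi_*$ is CP. A CP map $\Phi$ is unital iff $\Phi_*$ is trace-preserving. *)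

theory Defs
  imports Complex_Main "Jordan_Normal_Form.Matrix"
begin

text \<open>A multimatrix algebra \<open>\<Oplus>_{i\<in>I} B(C^{d i})\<close> is described by a finite nonempty
index set \<open>I\<close> and block dimensions \<open>d i > 0\<close>. Its elements are families
\<open>X :: 'i \<Rightarrow> complex mat\<close> with \<open>X i\<close> a \<open>d i \<times> d i\<close> matrix for \<open>i \<in> I\<close> and
(for uniqueness of representation) \<open>X i = 0_m 0 0\<close> outside \<open>I\<close>.\<close>

definition mm_valid :: "'i set \<Rightarrow> ('i \<Rightarrow> nat) \<Rightarrow> bool" where
  "mm_valid I d \<longleftrightarrow> finite I \<and> I \<noteq> {} \<and> (\<forall>i\<in>I. 0 < d i)"

definition mm_carrier :: "'i set \<Rightarrow> ('i \<Rightarrow> nat) \<Rightarrow> ('i \<Rightarrow> complex mat) set" where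
  "mm_carrier I d = {X. (\<forall>i\<in>I. X i \<in> carrier_mat (d i) (d i)) \<and> (\<forall>i. i \<notin> I \<longrightarrow> X i = 0\<^sub>m 0 0)}"

definition mm_add :: "('i \<Rightarrow> complex mat) \<Rightarrow> ('i \<Rightarrow> complex mat) \<Rightarrow> ('i \<Rightarrow> complex mat)" where
  "mm_add X Y = (\<lambda>i. X i + Y i)"

definition mm_smult :: "complex \<Rightarrow> ('i \<Rightarrow> complex mat) \<Rightarrow> ('i \<Rightarrow> complex mat)" where
  "mm_smult c X = (\<lambda>i. c \<cdot>\<^sub>m X i)"

definition mm_mult :: "('i \<Rightarrow> complex mat) \<Rightarrow> ('i \<Rightarrow> complex mat) \<Rightarrow> ('i \<Rightarrow> complex mat)" where
  "mm_mult X Y = (\<lambda>i. X i * Y i)"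

definition mat_tr :: "complex mat \<Rightarrow> complex" where
  "mat_tr M = (\<Sum>r<dim_row M. M $$ (r, r))"

definition mm_trace :: "'i set \<Rightarrow> ('i \<Rightarrow> complex mat) \<Rightarrow> complex" where
  "mm_trace I X = (\<Sum>i\<in>I. mat_tr (X i))"

definition mm_one :: "'i set \<Rightarrow> ('i \<Rightarrow> nat) \<Rightarrow> ('i \<Rightarrow> complex mat)" where
  "mm_one I d = (\<lambda>i. if i \<in> I then 1\<^sub>m (d i) else 0\<^sub>m 0 0)"

definition psd_mat :: "nat \<Rightarrow> complex mat \<Rightarrow> bool" where
  "psd_mat n M \<longleftrightarrow> M \<in> carrier_mat n n \<and>
     (\<forall>v :: nat \<Rightarrow> complex.
        Im (\<Sum>r<n. \<Sum>s<n. cnj (v r) * M $$ (r, s) * v s) = 0 \<and>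
        Re (\<Sum>r<n. \<Sum>s<n. cnj (v r) * M $$ (r, s) * v s) \<ge> 0)"

definition mm_pos :: "'i set \<Rightarrow> ('i \<Rightarrow> nat) \<Rightarrow> ('i \<Rightarrow> complex mat) \<Rightarrow> bool" where
  "mm_pos I d X \<longleftrightarrow> X \<in> mm_carrier I d \<and> (\<forall>i\<in>I. psd_mat (d i) (X i))"

definition mm_linear ::
  "'i set \<Rightarrow> ('i \<Rightarrow> nat) \<Rightarrow> 'k set \<Rightarrow> ('k \<Rightarrow> nat) \<Rightarrow>
   (('i \<Rightarrow> complex mat) \<Rightarrow> ('k \<Rightarrow> complex mat)) \<Rightarrow> bool" where
  "mm_linear I d K e \<Phi> \<longleftrightarrow>
     (\<forall>X\<in>mm_carrier I d. \<Phi> X \<in> mm_carrier K e) \<and>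
     (\<forall>X\<in>mm_carrier I d. \<forall>Y\<in>mm_carrier I d. \<Phi> (mm_add X Y) = mm_add (\<Phi> X) (\<Phi> Y)) \<and>
     (\<forall>c. \<forall>X\<in>mm_carrier I d. \<Phi> (mm_smult c X) = mm_smult c (\<Phi> X))"

text \<open>An element of \<open>M_n(A) = \<Oplus>_i B(C^n \<otimes> C^{d i})\<close>
is a family of \<open>n d_i \<times> n d_i\<close> matrices; index \<open>(a, r)\<close> of \<open>C^n \<otimes> C^{d i}\<close> is \<open>a * d i + r\<close>.
\<open>mm_block d Y a b\<close> is the \<open>(a,b)\<close> block, an element of \<open>A\<close>.\<close>
definition mm_block ::
  "'i set \<Rightarrow> ('i \<Rightarrow> nat) \<Rightarrow> ('i \<Rightarrow> complex mat) \<Rightarrow> nat \<Rightarrow> nat \<Rightarrow> ('i \<Rightarrow> complex mat)" where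
  "mm_block I d Y a b = (\<lambda>i. if i \<in> I then
      mat (d i) (d i) (\<lambda>(r, s). Y i $$ (a * d i + r, b * d i + s)) else 0\<^sub>m 0 0)"

definition mm_ampl ::
  "'i set \<Rightarrow> ('i \<Rightarrow> nat) \<Rightarrow> 'k set \<Rightarrow> ('k \<Rightarrow> nat) \<Rightarrow> nat \<Rightarrow>
   (('i \<Rightarrow> complex mat) \<Rightarrow> ('k \<Rightarrow> complex mat)) \<Rightarrow>
   ('i \<Rightarrow> complex mat) \<Rightarrow> ('k \<Rightarrow> complex mat)" where
  "mm_ampl I d K e n \<Phi> Y = (\<lambda>k. if k \<in> K then
      mat (n * e k) (n * e k) (\<lambda>(r, s).
        \<Phi> (mm_block I d Y (r div e k) (s div e k)) k $$ (r mod e k, s mod e k))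
    else 0\<^sub>m 0 0)"

definition mm_CP ::
  "'i set \<Rightarrow> ('i \<Rightarrow> nat) \<Rightarrow> 'k set \<Rightarrow> ('k \<Rightarrow> nat) \<Rightarrow>
   (('i \<Rightarrow> complex mat) \<Rightarrow> ('k \<Rightarrow> complex mat)) \<Rightarrow> bool" where
  "mm_CP I d K e \<Phi> \<longleftrightarrow> mm_linear I d K e \<Phi> \<and>
     (\<forall>n>0. \<forall>Y. mm_pos I (\<lambda>i. n * d i) Y \<longrightarrow>
        mm_pos K (\<lambda>k. n * e k) (mm_ampl I d K e n \<Phi> Y))"

definition mm_unital ::
  "'i set \<Rightarrow> ('i \<Rightarrow> nat) \<Rightarrow> 'k set \<Rightarrow> ('k \<Rightarrow> nat) \<Rightarrow>
   (('i \<Rightarrow> complex mat) \<Rightarrow> ('k \<Rightarrow> complex mat)) \<Rightarrow> bool" where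
  "mm_unital I d K e \<Phi> \<longleftrightarrow> \<Phi> (mm_one I d) = mm_one K e"

definition mm_dual ::
  "'i set \<Rightarrow> ('i \<Rightarrow> nat) \<Rightarrow> 'k set \<Rightarrow> ('k \<Rightarrow> nat) \<Rightarrow>
   (('i \<Rightarrow> complex mat) \<Rightarrow> ('k \<Rightarrow> complex mat)) \<Rightarrow>
   (('k \<Rightarrow> complex mat) \<Rightarrow> ('i \<Rightarrow> complex mat)) \<Rightarrow> bool" where
  "mm_dual I d K e \<Phi> \<Psi> \<longleftrightarrow>
     (\<forall>y\<in>mm_carrier K e. \<Psi> y \<in> mm_carrier I d) \<and>
     (\<forall>x\<in>mm_carrier I d. \<forall>y\<in>mm_carrier K e.
        mm_trace I (mm_mult (\<Psi> y) x) = mm_trace K (mm_mult y (\<Phi> x)))"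

text \<open>\<open>Hom(A,B) = \<Oplus>_{(j,i) \<in> J \<times> I} B(K_j \<otimes> H_i)\<close>; block \<open>(j,i)\<close> has dimension
\<open>dB j * dA i\<close>, with index \<open>(p, q)\<close> of \<open>K_j \<otimes> H_i\<close> encoded as \<open>p * dA i + q\<close>.\<close>
definition hom_dim :: "('i \<Rightarrow> nat) \<Rightarrow> ('j \<Rightarrow> nat) \<Rightarrow> ('j \<times> 'i \<Rightarrow> nat)" where
  "hom_dim dA dB = (\<lambda>(j, i). dB j * dA i)"

definition ptrace1 :: "nat \<Rightarrow> nat \<Rightarrow> complex mat \<Rightarrow> complex mat" where
  "ptrace1 m n X = mat n n (\<lambda>(q, q'). \<Sum>p<m. X $$ (p * n + q, p * n + q'))"

definition hom_TP :: "'i set \<Rightarrow> ('i \<Rightarrow> nat) \<Rightarrow> 'j set \<Rightarrow> ('j \<Rightarrow> nat) \<Rightarrow>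
    ('j \<times> 'i \<Rightarrow> complex mat) \<Rightarrow> bool" where
  "hom_TP I dA J dB X \<longleftrightarrow> (\<forall>i\<in>I.
     mat (dA i) (dA i) (\<lambda>(q, q'). \<Sum>j\<in>J. ptrace1 (dB j) (dA i) (X (j, i)) $$ (q, q'))
       = 1\<^sub>m (dA i))"

definition kron_id :: "nat \<Rightarrow> nat \<Rightarrow> complex mat \<Rightarrow> complex mat" where
  "kron_id m n M = mat (m * n) (m * n)
     (\<lambda>(r, s). if r div n = s div n then M $$ (r mod n, s mod n) else 0)"

text \<open>\<open>1_B \<boxtimes> \<rho> = (1_{K_j} \<otimes> \<rho>_i)_{(j,i)} \<in> Hom(A,B)\<close>.\<close>
definition box_one :: "'i set \<Rightarrow> ('i \<Rightarrow> nat) \<Rightarrow> 'j set \<Rightarrow> ('j \<Rightarrow> nat) \<Rightarrow>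
    ('i \<Rightarrow> complex mat) \<Rightarrow> ('j \<times> 'i \<Rightarrow> complex mat)" where
  "box_one I dA J dB \<rho> = (\<lambda>(j, i). if j \<in> J \<and> i \<in> I then kron_id (dB j) (dA i) (\<rho> i) else 0\<^sub>m 0 0)"

definition det_supermap ::
  "'a set \<Rightarrow> ('a \<Rightarrow> nat) \<Rightarrow> 'b set \<Rightarrow> ('b \<Rightarrow> nat) \<Rightarrow>
   'c set \<Rightarrow> ('c \<Rightarrow> nat) \<Rightarrow> 'd set \<Rightarrow> ('d \<Rightarrow> nat) \<Rightarrow>
   (('b \<times> 'a \<Rightarrow> complex mat) \<Rightarrow> ('d \<times> 'c \<Rightarrow> complex mat)) \<Rightarrow> bool" where
  "det_supermap I dA J dB K dC L dD S \<longleftrightarrow>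
     mm_CP (J \<times> I) (hom_dim dA dB) (L \<times> K) (hom_dim dC dD) S \<and>
     (\<forall>X. mm_pos (J \<times> I) (hom_dim dA dB) X \<and> hom_TP I dA J dB X \<longrightarrow>
          hom_TP K dC L dD (S X))"

end

theory Submission
  imports Defs
begin

text \<open>
  The map is \<open>N = Tr\<^sub>D \<circ> S \<circ> (\<tau>\<^sub>B \<boxtimes> -)\<close>, where \<open>\<tau>\<^sub>B\<close> is the maximally mixed state of \<open>B\<close>:
  it is completely positive as a composite of completely positive maps, and unital because \<open>S\<close>
  sends the channel \<open>\<tau>\<^sub>B \<boxtimes> 1\<^sub>A\<close> to a channel.
  For a state \<open>\<rho>\<close>, the functional \<open>f X = Tr((1\<^sub>D \<boxtimes> \<rho>) S X) = Tr(\<rho> Tr\<^sub>D (S X))\<close> is linear and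
  equals \<open>1\<close> on every channel. Such a functional vanishes on the kernel of the partial trace
  \<open>Tr\<^sub>B\<close>: for a hermitian \<open>H\<close> in the kernel and \<open>c\<close> large, \<open>(H + c 1) / (c dim B)\<close> is again a
  channel, so \<open>f H = 0\<close>; and the kernel is spanned by its hermitian elements.
  Hence \<open>f X = f (\<tau>\<^sub>B \<boxtimes> Tr\<^sub>B X) = Tr(N\<^sub>*(\<rho>) Tr\<^sub>B X) = Tr((1\<^sub>B \<boxtimes> N\<^sub>*(\<rho>)) X)\<close> for every \<open>X\<close>,
  and the trace pairing is nondegenerate.
\<close>

lemma sum_lessThan_mult_nat:
  "(\<Sum>r<m * n. g r) = (\<Sum>p<m. \<Sum>q<(n::nat). g (p * n + q))"
proof -
  have "(\<Sum>r<m * n. g r) = (\<Sum>p<m. \<Sum>r\<in>{p * n..<p * n + n}. g r)"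
    by (rule sum.nat_group[symmetric])
  also have "\<dots> = (\<Sum>p<m. \<Sum>q<n. g (p * n + q))"
    using sum.shift_bounds_nat_ivl[of g 0 "p * n" n for p]
    by (simp add: lessThan_atLeast0 add.commute)
  finally show ?thesis .
qed

lemma mult_add_less_mult: "(a::nat) < m \<Longrightarrow> b < n \<Longrightarrow> a * n + b < m * n"
proof -
  assume "a < m" "b < n"
  then have "a * n + b < Suc a * n" by simp
  also have "\<dots> \<le> m * n" using \<open>a < m\<close> by (intro mult_le_mono1) simp
  finally show ?thesis .
qed

lemma mult_add_eq_mult_add_iff:
  "(b::nat) < n \<Longrightarrow> b' < n \<Longrightarrow> a * n + b = a' * n + b' \<longleftrightarrow> a = a' \<and> b = b'"
proof
  assume "b < n" "b' < n" and eq: "a * n + b = a' * n + b'"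
  have "(a * n + b) div n = (a' * n + b') div n" "(a * n + b) mod n = (a' * n + b') mod n"
    using eq by simp_all
  with \<open>b < n\<close> \<open>b' < n\<close> show "a = a' \<and> b = b'" by simp
qed simp

lemma mod_less_if_less_mult: "(r::nat) < m * n \<Longrightarrow> r mod n < n"
  by (cases n) simp_all

lemma sum_if_both_eq:
  "(\<Sum>p<m. if x = p \<and> y = p then f else 0) = (if x = y \<and> x < (m::nat) then f else 0)"
  by (cases "x = y") (auto intro: sum.neutral)

lemma inj_insert_digit:
  assumes "c < m" and "0 < d"
  shows "inj (\<lambda>r::nat. r div d * (m * d) + (c * d + r mod d))"
proof (rule injI)
  fix r r' assume "r div d * (m * d) + (c * d + r mod d) = r' div d * (m * d) + (c * d + r' mod d)"
  moreover have "c * d + x mod d < m * d" for x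
    using assms by (simp add: mult_add_less_mult)
  ultimately have "r div d = r' div d" "r mod d = r' mod d"
    by (simp_all add: mult_add_eq_mult_add_iff)
  then show "r = r'"
    by (metis div_mult_mod_eq)
qed

lemma inj_on_drop_digit:
  assumes "0 < d"
  shows "inj_on (\<lambda>r::nat. r div (m * d) * d + r mod d) {r. r mod (m * d) div d = p}"
proof (rule inj_onI)
  fix r r' assume "r \<in> {r. r mod (m * d) div d = p}" "r' \<in> {r. r mod (m * d) div d = p}"
    and "r div (m * d) * d + r mod d = r' div (m * d) * d + r' mod d"
  then have "r div (m * d) = r' div (m * d)" "r mod d = r' mod d" "r mod (m * d) div d = r' mod (m * d) div d"
    using assms by (simp_all add: mult_add_eq_mult_add_iff)
  moreover have "x mod (m * d) = x mod (m * d) div d * d + x mod d" for x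
    by (metis div_mult_mod_eq mod_mod_cancel dvd_triv_right)
  ultimately show "r = r'"
    by (metis div_mult_mod_eq)
qed

subsection \<open>Traces\<close>

lemma mat_tr_mult:
  assumes "A \<in> carrier_mat n k" and "B \<in> carrier_mat k n"
  shows "mat_tr (A * B) = (\<Sum>r<n. \<Sum>t<k. A $$ (r, t) * B $$ (t, r))"
  using assms unfolding mat_tr_def
  by (auto simp: scalar_prod_def atLeast0LessThan intro!: sum.cong)

lemma mat_tr_add: "A \<in> carrier_mat n n \<Longrightarrow> B \<in> carrier_mat n n \<Longrightarrow> mat_tr (A + B) = mat_tr A + mat_tr B"
  by (simp add: mat_tr_def sum.distrib)

lemma mat_tr_smult: "A \<in> carrier_mat n n \<Longrightarrow> mat_tr (c \<cdot>\<^sub>m A) = c * mat_tr A"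
  by (simp add: mat_tr_def sum_distrib_left)

lemma kron_id_carrier: "kron_id m n M \<in> carrier_mat (m * n) (m * n)"
  by (simp add: kron_id_def)

lemma kron_id_dims [simp]: "dim_row (kron_id m n M) = m * n" "dim_col (kron_id m n M) = m * n"
  by (simp_all add: kron_id_def)

lemma kron_id_entry:
  "r < m * n \<Longrightarrow> s < m * n \<Longrightarrow>
   kron_id m n M $$ (r, s) = (if r div n = s div n then M $$ (r mod n, s mod n) else 0)"
  by (simp add: kron_id_def)

lemma mat_tr_kron_id_mult:
  assumes M: "M \<in> carrier_mat n n" and X: "X \<in> carrier_mat (m * n) (m * n)"
  shows "mat_tr (kron_id m n M * X) =
    (\<Sum>q<n. \<Sum>q'<n. M $$ (q, q') * (\<Sum>p<m. X $$ (p * n + q', p * n + q)))"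
proof -
  have "mat_tr (kron_id m n M * X) =
      (\<Sum>p<m. \<Sum>q<n. \<Sum>p'<m. \<Sum>q'<n.
         kron_id m n M $$ (p * n + q, p' * n + q') * X $$ (p' * n + q', p * n + q))"
    using X by (simp add: mat_tr_mult[OF kron_id_carrier] sum_lessThan_mult_nat)
  also have "\<dots> = (\<Sum>p<m. \<Sum>q<n. \<Sum>p'<m. \<Sum>q'<n.
      if p' = p then M $$ (q, q') * X $$ (p * n + q', p * n + q) else 0)"
    by (intro sum.cong refl) (simp add: kron_id_entry mult_add_less_mult)
  also have "\<dots> = (\<Sum>p<m. \<Sum>q<n. \<Sum>q'<n. M $$ (q, q') * X $$ (p * n + q', p * n + q))"
    by (rule sum.cong[OF refl], rule sum.cong[OF refl], subst sum.swap) simp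
  also have "\<dots> = (\<Sum>q<n. \<Sum>q'<n. \<Sum>p<m. M $$ (q, q') * X $$ (p * n + q', p * n + q))"
    by (subst sum.swap) (simp only: sum.swap[where A = "{..<m}" and B = "{..<n}"])
  finally show ?thesis
    by (simp add: sum_distrib_left)
qed

subsection \<open>Positive semidefinite matrices\<close>

definition quad_form :: "nat \<Rightarrow> complex mat \<Rightarrow> (nat \<Rightarrow> complex) \<Rightarrow> complex" where
  "quad_form n M v = (\<Sum>r<n. \<Sum>s<n. cnj (v r) * M $$ (r, s) * v s)"

lemma psd_mat_iff_quad_form:
  "psd_mat n M \<longleftrightarrow>
     M \<in> carrier_mat n n \<and> (\<forall>v. Im (quad_form n M v) = 0 \<and> 0 \<le> Re (quad_form n M v))"
  by (simp add: psd_mat_def quad_form_def)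

lemma quad_form_pullback:
  fixes v :: "nat \<Rightarrow> complex"
  assumes inj: "inj_on \<phi> (D \<inter> {..<n})" and range: "\<phi> ` (D \<inter> {..<n}) \<subseteq> {..<N}"
  shows "(\<Sum>r<n. \<Sum>s<n. if r \<in> D \<and> s \<in> D then cnj (v r) * Y $$ (\<phi> r, \<phi> s) * v s else 0) =
    quad_form N Y (\<lambda>x. if x \<in> \<phi> ` (D \<inter> {..<n}) then v (inv_into (D \<inter> {..<n}) \<phi> x) else 0)"
    (is "?lhs = quad_form N Y ?w")
proof -
  let ?D = "D \<inter> {..<n}"
  have inner: "(\<Sum>y<N. cnj (?w x) * Y $$ (x, y) * ?w y) = (\<Sum>y\<in>\<phi> ` ?D. cnj (?w x) * Y $$ (x, y) * ?w y)"
    for x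
    using range by (intro sum.mono_neutral_right) auto
  have "?lhs = (\<Sum>r<n. if r \<in> D then (\<Sum>s<n. if s \<in> D then cnj (v r) * Y $$ (\<phi> r, \<phi> s) * v s else 0) else 0)"
    by (intro sum.cong refl) auto
  also have "\<dots> = (\<Sum>r\<in>?D. \<Sum>s\<in>?D. cnj (v r) * Y $$ (\<phi> r, \<phi> s) * v s)"
    by (simp add: Int_commute[of D] sum.inter_restrict)
  also have "\<dots> = (\<Sum>x\<in>\<phi> ` ?D. \<Sum>y\<in>\<phi> ` ?D. cnj (?w x) * Y $$ (x, y) * ?w y)"
    by (simp add: sum.reindex[OF inj] inv_into_f_f[OF inj])
  also have "\<dots> = quad_form N Y ?w"
    unfolding quad_form_def inner using range by (intro sum.mono_neutral_left) auto
  finally show ?thesis .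
qed

text \<open>The blocks of the amplified partial trace and of \<open>box_mixed\<close> have the shape of \<open>M\<close> below.\<close>

lemma psd_mat_sum_pullbacks:
  assumes "finite P" and psd: "\<And>p. p \<in> P \<Longrightarrow> psd_mat (N p) (Y p)"
    and inj: "\<And>p. p \<in> P \<Longrightarrow> inj_on (\<phi> p) (D p \<inter> {..<n})"
    and range: "\<And>p. p \<in> P \<Longrightarrow> \<phi> p ` (D p \<inter> {..<n}) \<subseteq> {..<N p}"
    and "0 \<le> c" and M: "M \<in> carrier_mat n n"
    and entry: "\<And>r s. r < n \<Longrightarrow> s < n \<Longrightarrow> M $$ (r, s) =
       of_real c * (\<Sum>p\<in>P. if r \<in> D p \<and> s \<in> D p then Y p $$ (\<phi> p r, \<phi> p s) else 0)"
  shows "psd_mat n M"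
  unfolding psd_mat_iff_quad_form
proof (intro conjI allI M)
  fix v :: "nat \<Rightarrow> complex"
  define w where "w p x = (if x \<in> \<phi> p ` (D p \<inter> {..<n}) then v (inv_into (D p \<inter> {..<n}) (\<phi> p) x) else 0)"
    for p x
  have "quad_form n M v = of_real c * (\<Sum>p\<in>P. \<Sum>r<n. \<Sum>s<n.
      if r \<in> D p \<and> s \<in> D p then cnj (v r) * Y p $$ (\<phi> p r, \<phi> p s) * v s else 0)"
    unfolding quad_form_def
    by (simp add: entry sum_distrib_left sum_distrib_right sum.swap[where A = P] if_distrib
        mult_ac cong: if_cong)
  also have "\<dots> = of_real c * (\<Sum>p\<in>P. quad_form (N p) (Y p) (w p))"
    unfolding w_def using inj range by (auto intro!: sum.cong quad_form_pullback)
  finally have "quad_form n M v = of_real c * (\<Sum>p\<in>P. quad_form (N p) (Y p) (w p))" .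
  then show "Im (quad_form n M v) = 0" and "0 \<le> Re (quad_form n M v)"
    using psd \<open>0 \<le> c\<close> by (simp_all add: psd_mat_iff_quad_form Im_sum Re_sum sum_nonneg)
qed

lemma quad_form_hermitian_real:
  assumes herm: "\<And>r s. r < n \<Longrightarrow> s < n \<Longrightarrow> H $$ (s, r) = cnj (H $$ (r, s))"
  shows "Im (quad_form n H v) = 0"
proof -
  have "cnj (quad_form n H v) = (\<Sum>r<n. \<Sum>s<n. cnj (v s) * H $$ (s, r) * v r)"
    unfolding quad_form_def cnj_sum
  proof (intro sum.cong refl)
    fix r s assume "r \<in> {..<n}" "s \<in> {..<n}"
    then show "cnj (cnj (v r) * H $$ (r, s) * v s) = cnj (v s) * H $$ (s, r) * v r"
      using herm[of r s] by (simp add: mult_ac)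
  qed
  also have "\<dots> = quad_form n H v"
    unfolding quad_form_def by (rule sum.swap)
  finally show ?thesis
    by (simp add: complex_is_Real_iff[symmetric] Reals_cnj_iff)
qed

lemma norm_quad_form_le:
  "cmod (quad_form n H v) \<le> (\<Sum>r<n. \<Sum>s<n. cmod (H $$ (r, s))) * (\<Sum>r<n. (cmod (v r))\<^sup>2)"
proof -
  define V where "V = (\<Sum>r<n. (cmod (v r))\<^sup>2)"
  have "cmod (cnj (v r) * H $$ (r, s) * v s) \<le> cmod (H $$ (r, s)) * V" if "r < n" "s < n" for r s
  proof -
    have "(cmod (v r))\<^sup>2 \<le> V" "(cmod (v s))\<^sup>2 \<le> V"
      unfolding V_def using that by (auto intro!: member_le_sum)
    then have "cmod (v r) * cmod (v s) \<le> V"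
      using sum_squares_bound[of "cmod (v r)" "cmod (v s)"] by linarith
    then have "cmod (H $$ (r, s)) * (cmod (v r) * cmod (v s)) \<le> cmod (H $$ (r, s)) * V"
      by (rule mult_left_mono) simp
    then show ?thesis
      by (simp add: norm_mult mult_ac)
  qed
  then have "cmod (quad_form n H v) \<le> (\<Sum>r<n. \<Sum>s<n. cmod (H $$ (r, s)) * V)"
    unfolding quad_form_def
    by (intro order_trans[OF norm_sum sum_mono] order_trans[OF norm_sum sum_mono]) simp
  then show ?thesis
    by (simp add: V_def sum_distrib_right)
qed

lemma psd_mat_hermitian_shift:
  assumes M: "M \<in> carrier_mat n n" and "0 \<le> a"
    and herm: "\<And>r s. r < n \<Longrightarrow> s < n \<Longrightarrow> H $$ (s, r) = cnj (H $$ (r, s))"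
    and bound: "(\<Sum>r<n. \<Sum>s<n. cmod (H $$ (r, s))) \<le> c"
    and entry: "\<And>r s. r < n \<Longrightarrow> s < n \<Longrightarrow>
       M $$ (r, s) = of_real a * (H $$ (r, s) + (if r = s then of_real c else 0))"
  shows "psd_mat n M"
  unfolding psd_mat_iff_quad_form
proof (intro conjI allI M)
  fix v :: "nat \<Rightarrow> complex"
  define V where "V = (\<Sum>r<n. (cmod (v r))\<^sup>2)"
  have "quad_form n M v = (\<Sum>r<n. \<Sum>s<n. of_real a * (cnj (v r) * H $$ (r, s) * v s) +
      (if s = r then of_real a * of_real c * (cnj (v r) * v r) else 0))"
    unfolding quad_form_def by (intro sum.cong refl) (auto simp: entry algebra_simps)
  also have "\<dots> = of_real a * quad_form n H v + of_real a * of_real c * (\<Sum>r<n. cnj (v r) * v r)"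
    by (simp add: sum.distrib quad_form_def sum_distrib_left mult.assoc)
  also have "(\<Sum>r<n. cnj (v r) * v r) = of_real V"
    unfolding V_def of_real_sum
    by (intro sum.cong refl, subst complex_norm_square) (simp add: mult.commute)
  finally have qM: "quad_form n M v = of_real a * (quad_form n H v + of_real (c * V))"
    by (simp add: algebra_simps)
  have "cmod (quad_form n H v) \<le> (\<Sum>r<n. \<Sum>s<n. cmod (H $$ (r, s))) * V"
    unfolding V_def by (rule norm_quad_form_le)
  also have "\<dots> \<le> c * V"
    using bound by (rule mult_right_mono) (simp add: V_def sum_nonneg)
  finally show "Im (quad_form n M v) = 0" and "0 \<le> Re (quad_form n M v)"
    using quad_form_hermitian_real[OF herm] abs_Re_le_cmod[of "quad_form n H v"] \<open>0 \<le> a\<close>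
    by (simp_all add: qM)
qed

subsection \<open>Multimatrix algebras\<close>

lemma mm_carrier_blockD: "X \<in> mm_carrier I d \<Longrightarrow> i \<in> I \<Longrightarrow> X i \<in> carrier_mat (d i) (d i)"
  by (simp add: mm_carrier_def)

lemma mm_eqI:
  assumes "X \<in> mm_carrier I d" and "Y \<in> mm_carrier I d"
    and "\<And>i r s. i \<in> I \<Longrightarrow> r < d i \<Longrightarrow> s < d i \<Longrightarrow> X i $$ (r, s) = Y i $$ (r, s)"
  shows "X = Y"
proof
  fix i
  show "X i = Y i"
  proof (cases "i \<in> I")
    case True
    with assms show ?thesis
      by (intro eq_matI) (auto dest!: mm_carrier_blockD)
  qed (use assms in \<open>simp add: mm_carrier_def\<close>)
qed

lemma mm_add_carrier: "X \<in> mm_carrier I d \<Longrightarrow> Y \<in> mm_carrier I d \<Longrightarrow> mm_add X Y \<in> mm_carrier I d"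
  by (auto simp: mm_carrier_def mm_add_def)

lemma mm_smult_carrier: "X \<in> mm_carrier I d \<Longrightarrow> mm_smult c X \<in> mm_carrier I d"
  by (auto simp: mm_carrier_def mm_smult_def)

lemma mm_one_carrier: "mm_one I d \<in> mm_carrier I d"
  by (simp add: mm_one_def mm_carrier_def)

lemma mm_add_entry:
  "X \<in> mm_carrier I d \<Longrightarrow> Y \<in> mm_carrier I d \<Longrightarrow> i \<in> I \<Longrightarrow> r < d i \<Longrightarrow> s < d i \<Longrightarrow>
   mm_add X Y i $$ (r, s) = X i $$ (r, s) + Y i $$ (r, s)"
  by (auto simp: mm_carrier_def mm_add_def)

lemma mm_smult_entry:
  "X \<in> mm_carrier I d \<Longrightarrow> i \<in> I \<Longrightarrow> r < d i \<Longrightarrow> s < d i \<Longrightarrow>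
   mm_smult c X i $$ (r, s) = c * X i $$ (r, s)"
  by (auto simp: mm_carrier_def mm_smult_def)

lemma mm_one_entry: "i \<in> I \<Longrightarrow> r < d i \<Longrightarrow> s < d i \<Longrightarrow> mm_one I d i $$ (r, s) = (if r = s then 1 else 0)"
  by (simp add: mm_one_def)

definition mm_zero :: "'i set \<Rightarrow> ('i \<Rightarrow> nat) \<Rightarrow> ('i \<Rightarrow> complex mat)" where
  "mm_zero I d = (\<lambda>i. if i \<in> I then 0\<^sub>m (d i) (d i) else 0\<^sub>m 0 0)"

lemma mm_zero_carrier: "mm_zero I d \<in> mm_carrier I d"
  by (simp add: mm_zero_def mm_carrier_def)

lemma mm_zero_entry: "i \<in> I \<Longrightarrow> r < d i \<Longrightarrow> s < d i \<Longrightarrow> mm_zero I d i $$ (r, s) = 0"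
  by (simp add: mm_zero_def)

lemma mm_add_zero_left: "X \<in> mm_carrier I d \<Longrightarrow> mm_add (mm_zero I d) X = X"
  by (intro mm_eqI[OF mm_add_carrier[OF mm_zero_carrier]])
    (simp_all add: mm_add_entry[OF mm_zero_carrier] mm_zero_entry)

lemma mm_smult_zero: "mm_smult c (mm_zero I d) = mm_zero I d"
  by (intro mm_eqI[OF mm_smult_carrier[OF mm_zero_carrier] mm_zero_carrier])
    (simp add: mm_smult_entry[OF mm_zero_carrier] mm_zero_entry)

lemma mm_add_neg_self: "X \<in> mm_carrier I d \<Longrightarrow> mm_add X (mm_smult (-1) X) = mm_zero I d"
  by (intro mm_eqI[OF mm_add_carrier[OF _ mm_smult_carrier] mm_zero_carrier])
    (simp_all add: mm_add_entry[OF _ mm_smult_carrier] mm_smult_entry mm_zero_entry)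

definition mm_adjoint :: "('i \<Rightarrow> complex mat) \<Rightarrow> ('i \<Rightarrow> complex mat)" where
  "mm_adjoint X = (\<lambda>i. mat (dim_col (X i)) (dim_row (X i)) (\<lambda>(r, s). cnj (X i $$ (s, r))))"

lemma mm_adjoint_carrier: "X \<in> mm_carrier I d \<Longrightarrow> mm_adjoint X \<in> mm_carrier I d"
  by (auto simp: mm_carrier_def mm_adjoint_def intro!: eq_matI)

lemma mm_adjoint_entry:
  "X \<in> mm_carrier I d \<Longrightarrow> i \<in> I \<Longrightarrow> r < d i \<Longrightarrow> s < d i \<Longrightarrow> mm_adjoint X i $$ (r, s) = cnj (X i $$ (s, r))"
  unfolding mm_adjoint_def using mm_carrier_blockD[of X I d i] by auto

definition mm_hermitian :: "'i set \<Rightarrow> ('i \<Rightarrow> nat) \<Rightarrow> ('i \<Rightarrow> complex mat) \<Rightarrow> bool" where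
  "mm_hermitian I d H \<longleftrightarrow> H \<in> mm_carrier I d \<and> mm_adjoint H = H"

lemma mm_hermitian_entry:
  assumes "mm_hermitian I d H" and "i \<in> I" "r < d i" "s < d i"
  shows "H i $$ (s, r) = cnj (H i $$ (r, s))"
  using assms mm_adjoint_entry[of H I d i s r] by (simp add: mm_hermitian_def)

lemma mm_hermitianI:
  assumes "H \<in> mm_carrier I d"
    and "\<And>i r s. i \<in> I \<Longrightarrow> r < d i \<Longrightarrow> s < d i \<Longrightarrow> H i $$ (s, r) = cnj (H i $$ (r, s))"
  shows "mm_hermitian I d H"
  unfolding mm_hermitian_def
proof (intro conjI assms(1) mm_eqI[OF mm_adjoint_carrier[OF assms(1)] assms(1)])
  fix i r s assume "i \<in> I" "r < d i" "s < d i"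
  then show "mm_adjoint H i $$ (r, s) = H i $$ (r, s)"
    using assms(2)[of i s r] by (simp add: mm_adjoint_entry[OF assms(1)])
qed

lemma mm_adjoint_zero: "mm_adjoint (mm_zero I d) = mm_zero I d"
  by (intro mm_eqI[OF mm_adjoint_carrier[OF mm_zero_carrier] mm_zero_carrier])
    (simp add: mm_adjoint_entry[OF mm_zero_carrier] mm_zero_entry)

definition mm_re :: "('i \<Rightarrow> complex mat) \<Rightarrow> ('i \<Rightarrow> complex mat)" where
  "mm_re X = mm_smult (1 / 2) (mm_add X (mm_adjoint X))"

definition mm_im :: "('i \<Rightarrow> complex mat) \<Rightarrow> ('i \<Rightarrow> complex mat)" where
  "mm_im X = mm_smult (- \<i> / 2) (mm_add X (mm_smult (-1) (mm_adjoint X)))"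

lemma mm_re_carrier: "X \<in> mm_carrier I d \<Longrightarrow> mm_re X \<in> mm_carrier I d"
  by (simp add: mm_re_def mm_smult_carrier mm_add_carrier mm_adjoint_carrier)

lemma mm_im_carrier: "X \<in> mm_carrier I d \<Longrightarrow> mm_im X \<in> mm_carrier I d"
  by (simp add: mm_im_def mm_smult_carrier mm_add_carrier mm_adjoint_carrier)

lemma mm_re_hermitian:
  assumes X: "X \<in> mm_carrier I d"
  shows "mm_hermitian I d (mm_re X)"
proof -
  have X': "mm_adjoint X \<in> mm_carrier I d"
    by (rule mm_adjoint_carrier[OF X])
  show ?thesis
    by (rule mm_hermitianI[OF mm_re_carrier[OF X]])
      (simp add: mm_re_def mm_smult_entry[OF mm_add_carrier[OF X X']] mm_add_entry[OF X X']
        mm_adjoint_entry[OF X] algebra_simps)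
qed

lemma mm_im_hermitian:
  assumes X: "X \<in> mm_carrier I d"
  shows "mm_hermitian I d (mm_im X)"
proof -
  have X': "mm_adjoint X \<in> mm_carrier I d"
    by (rule mm_adjoint_carrier[OF X])
  have nX': "mm_smult (-1) (mm_adjoint X) \<in> mm_carrier I d"
    by (rule mm_smult_carrier[OF X'])
  show ?thesis
    by (rule mm_hermitianI[OF mm_im_carrier[OF X]])
      (simp add: mm_im_def mm_smult_entry[OF mm_add_carrier[OF X nX']] mm_add_entry[OF X nX']
        mm_smult_entry[OF X'] mm_adjoint_entry[OF X] algebra_simps)
qed

lemma mm_re_add_im:
  assumes X: "X \<in> mm_carrier I d"
  shows "mm_add (mm_re X) (mm_smult \<i> (mm_im X)) = X"
proof -
  have X': "mm_adjoint X \<in> mm_carrier I d"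
    by (rule mm_adjoint_carrier[OF X])
  have nX': "mm_smult (-1) (mm_adjoint X) \<in> mm_carrier I d"
    by (rule mm_smult_carrier[OF X'])
  have re: "mm_re X \<in> mm_carrier I d" and im: "mm_smult \<i> (mm_im X) \<in> mm_carrier I d"
    using X by (simp_all add: mm_re_carrier mm_im_carrier mm_smult_carrier)
  show ?thesis
  proof (rule mm_eqI[OF mm_add_carrier[OF re im] X])
    fix i r s assume "i \<in> I" "r < d i" "s < d i"
    then have "mm_add (mm_re X) (mm_smult \<i> (mm_im X)) i $$ (r, s) = mm_re X i $$ (r, s) + \<i> * mm_im X i $$ (r, s)"
      by (simp add: mm_add_entry[OF re im] mm_smult_entry[OF mm_im_carrier[OF X]])
    also have "\<dots> = X i $$ (r, s)"
      using \<open>i \<in> I\<close> \<open>r < d i\<close> \<open>s < d i\<close>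
      by (simp add: mm_re_def mm_im_def mm_smult_entry[OF mm_add_carrier[OF X X']]
          mm_smult_entry[OF mm_add_carrier[OF X nX']] mm_add_entry[OF X X'] mm_add_entry[OF X nX']
          mm_smult_entry[OF X'] algebra_simps)
    finally show "mm_add (mm_re X) (mm_smult \<i> (mm_im X)) i $$ (r, s) = X i $$ (r, s)" .
  qed
qed

lemma mm_re_zero: "mm_re (mm_zero I d) = mm_zero I d"
  by (simp add: mm_re_def mm_adjoint_zero mm_add_zero_left mm_zero_carrier mm_smult_zero)

lemma mm_im_zero: "mm_im (mm_zero I d) = mm_zero I d"
  by (simp add: mm_im_def mm_adjoint_zero mm_add_zero_left mm_zero_carrier mm_smult_zero)

lemma mm_pos_smult_one: "0 \<le> a \<Longrightarrow> mm_pos I d (mm_smult (of_real a) (mm_one I d))"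
  unfolding mm_pos_def
proof (intro conjI ballI mm_smult_carrier mm_one_carrier)
  fix i assume "0 \<le> a" and "i \<in> I"
  then show "psd_mat (d i) (mm_smult (of_real a) (mm_one I d) i)"
    by (intro psd_mat_hermitian_shift[where H = "0\<^sub>m (d i) (d i)" and a = a and c = 1])
      (simp_all add: mm_smult_def mm_one_def)
qed

lemma mm_pos_hermitian_shift:
  assumes H: "mm_hermitian I d H" and "0 \<le> a"
    and bound: "\<And>i. i \<in> I \<Longrightarrow> (\<Sum>r<d i. \<Sum>s<d i. cmod (H i $$ (r, s))) \<le> c"
  shows "mm_pos I d (mm_smult (of_real a) (mm_add H (mm_smult (of_real c) (mm_one I d))))"
proof -
  have Hc: "H \<in> mm_carrier I d"
    using H by (simp add: mm_hermitian_def)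
  have one_c: "mm_smult (of_real c) (mm_one I d) \<in> mm_carrier I d"
    by (rule mm_smult_carrier[OF mm_one_carrier])
  have shift_c: "mm_add H (mm_smult (of_real c) (mm_one I d)) \<in> mm_carrier I d"
    by (rule mm_add_carrier[OF Hc one_c])
  show ?thesis
    unfolding mm_pos_def
  proof (intro conjI ballI mm_smult_carrier[OF shift_c])
    fix i assume i: "i \<in> I"
    show "psd_mat (d i) (mm_smult (of_real a) (mm_add H (mm_smult (of_real c) (mm_one I d))) i)"
    proof (rule psd_mat_hermitian_shift[OF mm_carrier_blockD[OF mm_smult_carrier[OF shift_c] i] \<open>0 \<le> a\<close>
          mm_hermitian_entry[OF H i] bound[OF i]])
      fix r s assume "r < d i" "s < d i"
      with i show "mm_smult (of_real a) (mm_add H (mm_smult (of_real c) (mm_one I d))) i $$ (r, s) =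
          of_real a * (H i $$ (r, s) + (if r = s then of_real c else 0))"
        by (simp add: mm_smult_entry[OF shift_c] mm_add_entry[OF Hc one_c]
            mm_smult_entry[OF mm_one_carrier] mm_one_entry)
    qed
  qed
qed

lemma mm_trace_mult_add:
  assumes "B \<in> mm_carrier I d" "X \<in> mm_carrier I d" "Y \<in> mm_carrier I d"
  shows "mm_trace I (mm_mult B (mm_add X Y)) = mm_trace I (mm_mult B X) + mm_trace I (mm_mult B Y)"
  unfolding mm_trace_def mm_mult_def mm_add_def sum.distrib[symmetric]
proof (intro sum.cong refl)
  fix i assume "i \<in> I"
  with assms have "B i \<in> carrier_mat (d i) (d i)" "X i \<in> carrier_mat (d i) (d i)" "Y i \<in> carrier_mat (d i) (d i)"
    by (simp_all add: mm_carrier_blockD)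
  then show "mat_tr (B i * (X i + Y i)) = mat_tr (B i * X i) + mat_tr (B i * Y i)"
    by (simp add: mult_add_distrib_mat mat_tr_add[of _ "d i"])
qed

lemma mm_trace_mult_smult:
  assumes "B \<in> mm_carrier I d" "X \<in> mm_carrier I d"
  shows "mm_trace I (mm_mult B (mm_smult c X)) = c * mm_trace I (mm_mult B X)"
  unfolding mm_trace_def mm_mult_def mm_smult_def sum_distrib_left
proof (intro sum.cong refl)
  fix i assume "i \<in> I"
  with assms have "B i \<in> carrier_mat (d i) (d i)" "X i \<in> carrier_mat (d i) (d i)"
    by (simp_all add: mm_carrier_blockD)
  then show "mat_tr (B i * (c \<cdot>\<^sub>m X i)) = c * mat_tr (B i * X i)"
    by (simp add: mult_smult_distrib mat_tr_smult[of _ "d i"])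
qed

lemma mm_trace_mult_one: "\<rho> \<in> mm_carrier I d \<Longrightarrow> mm_trace I (mm_mult \<rho> (mm_one I d)) = mm_trace I \<rho>"
  unfolding mm_trace_def mm_mult_def mm_one_def
  by (intro sum.cong refl) (auto simp: mm_carrier_def)

lemma mm_eq_if_trace_mult_eq:
  assumes W: "W \<in> mm_carrier I d" and W': "W' \<in> mm_carrier I d" and "finite I"
    and eq: "\<And>X. X \<in> mm_carrier I d \<Longrightarrow> mm_trace I (mm_mult W X) = mm_trace I (mm_mult W' X)"
  shows "W = W'"
proof (rule mm_eqI[OF W W'])
  fix i r s assume i: "i \<in> I" and rs: "r < d i" "s < d i"
  define E where "E = (\<lambda>i'. if i' = i then mat (d i) (d i) (\<lambda>(a, b). if (a, b) = (s, r) then 1 :: complex else 0)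
    else if i' \<in> I then 0\<^sub>m (d i') (d i') else 0\<^sub>m 0 0)"
  have E: "E \<in> mm_carrier I d"
    using i by (auto simp: E_def mm_carrier_def)
  have "mm_trace I (mm_mult V E) = V i $$ (r, s)" if V: "V \<in> mm_carrier I d" for V
  proof -
    have "mm_trace I (mm_mult V E) = mat_tr (V i * E i)"
      unfolding mm_trace_def mm_mult_def
      using \<open>finite I\<close> i V E
      by (subst sum.remove[OF _ i]) (auto simp: E_def mm_carrier_def mat_tr_def intro!: sum.neutral)
    also have "\<dots> = (\<Sum>a<d i. \<Sum>b<d i. V i $$ (a, b) * E i $$ (b, a))"
      using V E i by (intro mat_tr_mult) (simp_all add: mm_carrier_blockD)
    also have "\<dots> = (\<Sum>a<d i. if a = r then (\<Sum>b<d i. if b = s then V i $$ (a, b) else 0) else 0)"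
      by (intro sum.cong refl) (auto simp: E_def if_distrib[of "(*) _"] cong: if_cong)
    also have "\<dots> = V i $$ (r, s)"
      using rs by simp
    finally show ?thesis .
  qed
  then show "W i $$ (r, s) = W' i $$ (r, s)"
    using eq[OF E] W W' by simp
qed

subsection \<open>Complete positivity\<close>

lemma mm_block_carrier: "mm_block I d Y a b \<in> mm_carrier I d"
  by (simp add: mm_block_def mm_carrier_def)

lemma mm_block_entry:
  "i \<in> I \<Longrightarrow> r < d i \<Longrightarrow> s < d i \<Longrightarrow> mm_block I d Y a b i $$ (r, s) = Y i $$ (a * d i + r, b * d i + s)"
  by (simp add: mm_block_def)

lemma mm_ampl_carrier: "mm_ampl I d K e n \<Phi> Y \<in> mm_carrier K (\<lambda>k. n * e k)"
  by (simp add: mm_ampl_def mm_carrier_def)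

lemma mm_ampl_entry:
  "k \<in> K \<Longrightarrow> r < n * e k \<Longrightarrow> s < n * e k \<Longrightarrow>
   mm_ampl I d K e n \<Phi> Y k $$ (r, s) = \<Phi> (mm_block I d Y (r div e k) (s div e k)) k $$ (r mod e k, s mod e k)"
  by (simp add: mm_ampl_def)

lemma mm_block_ampl:
  assumes "\<And>X. X \<in> mm_carrier I d \<Longrightarrow> \<Phi> X \<in> mm_carrier K e" and "a < n" "b < n"
  shows "mm_block K e (mm_ampl I d K e n \<Phi> Y) a b = \<Phi> (mm_block I d Y a b)"
  using assms by (intro mm_eqI[OF mm_block_carrier])
    (simp_all add: mm_block_carrier mm_block_entry mm_ampl_entry mult_add_less_mult)

lemma mm_ampl_comp:
  assumes "\<And>X. X \<in> mm_carrier I d \<Longrightarrow> \<Phi> X \<in> mm_carrier K e"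
  shows "mm_ampl K e M f n \<Psi> (mm_ampl I d K e n \<Phi> Y) = mm_ampl I d M f n (\<lambda>X. \<Psi> (\<Phi> X)) Y"
proof (rule mm_eqI[OF mm_ampl_carrier mm_ampl_carrier])
  fix m r s assume "m \<in> M" "r < n * f m" "s < n * f m"
  moreover from this have "r div f m < n" "s div f m < n"
    by (simp_all add: less_mult_imp_div_less)
  ultimately show "mm_ampl K e M f n \<Psi> (mm_ampl I d K e n \<Phi> Y) m $$ (r, s) =
      mm_ampl I d M f n (\<lambda>X. \<Psi> (\<Phi> X)) Y m $$ (r, s)"
    by (simp add: mm_ampl_entry mm_block_ampl[OF assms])
qed

lemma mm_CP_comp:
  assumes \<Phi>: "mm_CP I d K e \<Phi>" and \<Psi>: "mm_CP K e M f \<Psi>"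
  shows "mm_CP I d M f (\<lambda>X. \<Psi> (\<Phi> X))"
proof -
  have carrier: "\<And>X. X \<in> mm_carrier I d \<Longrightarrow> \<Phi> X \<in> mm_carrier K e"
    using \<Phi> by (simp add: mm_CP_def mm_linear_def)
  have "mm_linear I d M f (\<lambda>X. \<Psi> (\<Phi> X))"
    using assms carrier by (auto simp: mm_CP_def mm_linear_def)
  moreover have "mm_pos M (\<lambda>k. n * f k) (mm_ampl I d M f n (\<lambda>X. \<Psi> (\<Phi> X)) Y)"
    if "0 < n" and "mm_pos I (\<lambda>i. n * d i) Y" for n Y
  proof -
    have "mm_pos K (\<lambda>k. n * e k) (mm_ampl I d K e n \<Phi> Y)"
      using \<Phi> that by (simp add: mm_CP_def)
    then have "mm_pos M (\<lambda>k. n * f k) (mm_ampl K e M f n \<Psi> (mm_ampl I d K e n \<Phi> Y))"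
      using \<Psi> that by (simp add: mm_CP_def)
    then show ?thesis
      by (simp add: mm_ampl_comp[OF carrier])
  qed
  ultimately show ?thesis
    by (simp add: mm_CP_def)
qed

subsection \<open>The partial trace\<close>

definition hom_ptrace ::
  "'i set \<Rightarrow> ('i \<Rightarrow> nat) \<Rightarrow> 'j set \<Rightarrow> ('j \<Rightarrow> nat) \<Rightarrow> ('j \<times> 'i \<Rightarrow> complex mat) \<Rightarrow> ('i \<Rightarrow> complex mat)"
where
  "hom_ptrace I dA J dB X = (\<lambda>i. if i \<in> I then
     mat (dA i) (dA i) (\<lambda>(q, q'). \<Sum>j\<in>J. ptrace1 (dB j) (dA i) (X (j, i)) $$ (q, q')) else 0\<^sub>m 0 0)"

lemma hom_TP_iff_ptrace: "hom_TP I dA J dB X \<longleftrightarrow> hom_ptrace I dA J dB X = mm_one I dA"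
  unfolding hom_TP_def hom_ptrace_def mm_one_def fun_eq_iff by (metis (no_types, lifting))

lemma hom_ptrace_carrier: "hom_ptrace I dA J dB X \<in> mm_carrier I dA"
  by (simp add: hom_ptrace_def mm_carrier_def)

lemma hom_ptrace_entry:
  "i \<in> I \<Longrightarrow> q < dA i \<Longrightarrow> q' < dA i \<Longrightarrow>
   hom_ptrace I dA J dB X i $$ (q, q') = (\<Sum>j\<in>J. \<Sum>p<dB j. X (j, i) $$ (p * dA i + q, p * dA i + q'))"
  by (simp add: hom_ptrace_def ptrace1_def)

lemma hom_carrier_blockD:
  "X \<in> mm_carrier (J \<times> I) (hom_dim dA dB) \<Longrightarrow> j \<in> J \<Longrightarrow> i \<in> I \<Longrightarrow>
   X (j, i) \<in> carrier_mat (dB j * dA i) (dB j * dA i)"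
  by (simp add: mm_carrier_def hom_dim_def)

lemma hom_index_less: "p < dB j \<Longrightarrow> q < dA i \<Longrightarrow> p * dA i + q < hom_dim dA dB (j, i)"
  by (simp add: hom_dim_def mult_add_less_mult)

lemma hom_mod_less: "r < hom_dim dA dB (j, i) \<Longrightarrow> r mod dA i < dA i"
  by (simp add: hom_dim_def mod_less_if_less_mult)

lemma hom_ptrace_add:
  assumes X: "X \<in> mm_carrier (J \<times> I) (hom_dim dA dB)" and Y: "Y \<in> mm_carrier (J \<times> I) (hom_dim dA dB)"
  shows "hom_ptrace I dA J dB (mm_add X Y) = mm_add (hom_ptrace I dA J dB X) (hom_ptrace I dA J dB Y)"
  by (intro mm_eqI[OF hom_ptrace_carrier mm_add_carrier[OF hom_ptrace_carrier hom_ptrace_carrier]])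
    (simp add: hom_ptrace_entry mm_add_entry[OF hom_ptrace_carrier hom_ptrace_carrier]
      mm_add_entry[OF X Y] hom_index_less sum.distrib cong: sum.cong_simp)

lemma hom_ptrace_smult:
  assumes X: "X \<in> mm_carrier (J \<times> I) (hom_dim dA dB)"
  shows "hom_ptrace I dA J dB (mm_smult c X) = mm_smult c (hom_ptrace I dA J dB X)"
  by (intro mm_eqI[OF hom_ptrace_carrier mm_smult_carrier[OF hom_ptrace_carrier]])
    (simp add: hom_ptrace_entry mm_smult_entry[OF hom_ptrace_carrier] mm_smult_entry[OF X]
      hom_index_less sum_distrib_left cong: sum.cong_simp)

lemma hom_ptrace_mm_adjoint:
  assumes X: "X \<in> mm_carrier (J \<times> I) (hom_dim dA dB)"
  shows "hom_ptrace I dA J dB (mm_adjoint X) = mm_adjoint (hom_ptrace I dA J dB X)"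
  by (intro mm_eqI[OF hom_ptrace_carrier mm_adjoint_carrier[OF hom_ptrace_carrier]])
    (simp add: hom_ptrace_entry mm_adjoint_entry[OF hom_ptrace_carrier] mm_adjoint_entry[OF X]
      hom_index_less cnj_sum cong: sum.cong_simp)

lemma hom_ptrace_mm_re:
  "X \<in> mm_carrier (J \<times> I) (hom_dim dA dB) \<Longrightarrow> hom_ptrace I dA J dB (mm_re X) = mm_re (hom_ptrace I dA J dB X)"
  by (simp add: mm_re_def hom_ptrace_smult hom_ptrace_add hom_ptrace_mm_adjoint mm_add_carrier
      mm_adjoint_carrier)

lemma hom_ptrace_mm_im:
  "X \<in> mm_carrier (J \<times> I) (hom_dim dA dB) \<Longrightarrow> hom_ptrace I dA J dB (mm_im X) = mm_im (hom_ptrace I dA J dB X)"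
  by (simp add: mm_im_def hom_ptrace_smult hom_ptrace_add hom_ptrace_mm_adjoint mm_add_carrier
      mm_adjoint_carrier mm_smult_carrier)

lemma hom_ptrace_linear: "mm_linear (J \<times> I) (hom_dim dA dB) I dA (hom_ptrace I dA J dB)"
  by (simp add: mm_linear_def hom_ptrace_carrier hom_ptrace_add hom_ptrace_smult)

lemma box_one_carrier: "box_one I dA J dB \<rho> \<in> mm_carrier (J \<times> I) (hom_dim dA dB)"
  by (auto simp: box_one_def mm_carrier_def hom_dim_def)

lemma box_one_apply: "j \<in> J \<Longrightarrow> i \<in> I \<Longrightarrow> box_one I dA J dB \<rho> (j, i) = kron_id (dB j) (dA i) (\<rho> i)"
  by (simp add: box_one_def)

lemma mm_trace_box_one_mult:
  assumes \<sigma>: "\<sigma> \<in> mm_carrier I dA" and X: "X \<in> mm_carrier (J \<times> I) (hom_dim dA dB)"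
    and "finite I" "finite J"
  shows "mm_trace (J \<times> I) (mm_mult (box_one I dA J dB \<sigma>) X) = mm_trace I (mm_mult \<sigma> (hom_ptrace I dA J dB X))"
proof -
  have "mm_trace (J \<times> I) (mm_mult (box_one I dA J dB \<sigma>) X) =
      (\<Sum>i\<in>I. \<Sum>j\<in>J. mat_tr (kron_id (dB j) (dA i) (\<sigma> i) * X (j, i)))"
  proof -
    have "mm_trace (J \<times> I) (mm_mult (box_one I dA J dB \<sigma>) X) =
        (\<Sum>(j, i)\<in>J \<times> I. mat_tr (kron_id (dB j) (dA i) (\<sigma> i) * X (j, i)))"
      unfolding mm_trace_def mm_mult_def by (rule sum.cong) (auto simp: box_one_apply)
    then show ?thesis
      by (simp add: sum.cartesian_product[symmetric] sum.swap[where A = J])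
  qed
  also have "\<dots> = (\<Sum>i\<in>I. \<Sum>j\<in>J. \<Sum>q<dA i. \<Sum>q'<dA i.
      \<sigma> i $$ (q, q') * (\<Sum>p<dB j. X (j, i) $$ (p * dA i + q', p * dA i + q)))"
    using \<sigma> X by (intro sum.cong refl mat_tr_kron_id_mult) (simp_all add: mm_carrier_blockD hom_carrier_blockD)
  also have "\<dots> = (\<Sum>i\<in>I. \<Sum>q<dA i. \<Sum>q'<dA i. \<sigma> i $$ (q, q') * hom_ptrace I dA J dB X i $$ (q', q))"
    by (simp add: hom_ptrace_entry sum_distrib_left sum.swap[where A = J])
  also have "\<dots> = mm_trace I (mm_mult \<sigma> (hom_ptrace I dA J dB X))"
    unfolding mm_trace_def mm_mult_def
    using \<sigma> by (intro sum.cong refl mat_tr_mult[symmetric]) (simp_all add: mm_carrier_blockD hom_ptrace_def)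
  finally show ?thesis .
qed

lemma mm_ampl_hom_ptrace_entry:
  assumes "i \<in> I" and "0 < dA i" and "r < n * dA i" and "s < n * dA i"
  shows "mm_ampl (J \<times> I) (hom_dim dA dB) I dA n (hom_ptrace I dA J dB) Z i $$ (r, s) =
    (\<Sum>j\<in>J. \<Sum>p<dB j. Z (j, i) $$ (r div dA i * (dB j * dA i) + (p * dA i + r mod dA i),
                                   s div dA i * (dB j * dA i) + (p * dA i + s mod dA i)))"
  using assms
  by (simp add: mm_ampl_entry hom_ptrace_entry mm_block_entry hom_index_less cong: sum.cong_simp)
    (simp add: hom_dim_def)

lemma hom_ptrace_CP:
  assumes "mm_valid I dA" and "finite J"
  shows "mm_CP (J \<times> I) (hom_dim dA dB) I dA (hom_ptrace I dA J dB)"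
  unfolding mm_CP_def
proof (intro conjI hom_ptrace_linear allI impI)
  fix n Z assume Z: "mm_pos (J \<times> I) (\<lambda>b. n * hom_dim dA dB b) Z"
  let ?T = "mm_ampl (J \<times> I) (hom_dim dA dB) I dA n (hom_ptrace I dA J dB) Z"
  show "mm_pos I (\<lambda>i. n * dA i) ?T"
    unfolding mm_pos_def
  proof (intro conjI mm_ampl_carrier ballI)
    fix i assume i: "i \<in> I"
    define d where "d = dA i"
    have "0 < d"
      using assms i by (simp add: mm_valid_def d_def)
    \<comment> \<open>the index \<open>(a, q)\<close> of \<open>C\<^sup>n \<otimes> H\<^sub>i\<close> goes to the index \<open>(a, p, q)\<close> of \<open>C\<^sup>n \<otimes> K\<^sub>j \<otimes> H\<^sub>i\<close>\<close>
    define \<phi> where "\<phi> jp r = r div d * (dB (fst jp) * d) + (snd jp * d + r mod d)" for jp r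
    have "psd_mat (n * d) (?T i)"
    proof (rule psd_mat_sum_pullbacks[where P = "Sigma J (\<lambda>j. {..<dB j})" and D = "\<lambda>_. UNIV"
          and N = "\<lambda>jp. n * (dB (fst jp) * d)" and Y = "\<lambda>jp. Z (fst jp, i)" and \<phi> = \<phi> and c = 1])
      show "finite (Sigma J (\<lambda>j. {..<dB j}))"
        using assms by simp
      show "psd_mat (n * (dB (fst jp) * d)) (Z (fst jp, i))" if "jp \<in> Sigma J (\<lambda>j. {..<dB j})" for jp
        using Z i that by (auto simp: mm_pos_def hom_dim_def d_def)
      show "inj_on (\<phi> jp) (UNIV \<inter> {..<n * d})" if "jp \<in> Sigma J (\<lambda>j. {..<dB j})" for jp
        unfolding \<phi>_def using that \<open>0 < d\<close>
        by (intro inj_on_subset[OF inj_insert_digit]) auto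
      show "\<phi> jp ` (UNIV \<inter> {..<n * d}) \<subseteq> {..<n * (dB (fst jp) * d)}"
        if "jp \<in> Sigma J (\<lambda>j. {..<dB j})" for jp
        using that \<open>0 < d\<close>
        by (auto simp: \<phi>_def less_mult_imp_div_less intro!: mult_add_less_mult)
      show "?T i \<in> carrier_mat (n * d) (n * d)"
        using mm_carrier_blockD[OF mm_ampl_carrier i] by (simp add: d_def)
      fix r s assume "r < n * d" "s < n * d"
      then show "?T i $$ (r, s) = of_real 1 *
          (\<Sum>jp\<in>Sigma J (\<lambda>j. {..<dB j}). if r \<in> UNIV \<and> s \<in> UNIV then Z (fst jp, i) $$ (\<phi> jp r, \<phi> jp s) else 0)"
        using assms i \<open>0 < d\<close>
        by (simp add: mm_ampl_hom_ptrace_entry sum.Sigma split_def \<phi>_def d_def)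
    qed simp
    then show "psd_mat (n * dA i) (?T i)"
      by (simp add: d_def)
  qed
qed

subsection \<open>Tensoring with the maximally mixed state\<close>

definition mm_dim :: "'j set \<Rightarrow> ('j \<Rightarrow> nat) \<Rightarrow> nat" where
  "mm_dim J d = (\<Sum>j\<in>J. d j)"

lemma mm_dim_pos: "mm_valid J d \<Longrightarrow> 0 < mm_dim J d"
  by (simp add: mm_valid_def mm_dim_def sum_pos)

text \<open>\<open>box_mixed I dA J dB a = \<tau>\<^sub>B \<boxtimes> a\<close>, where \<open>\<tau>\<^sub>B = 1\<^sub>B / Tr 1\<^sub>B\<close> is the maximally mixed state
  of \<open>B\<close>.\<close>

definition box_mixed ::
  "'i set \<Rightarrow> ('i \<Rightarrow> nat) \<Rightarrow> 'j set \<Rightarrow> ('j \<Rightarrow> nat) \<Rightarrow> ('i \<Rightarrow> complex mat) \<Rightarrow> ('j \<times> 'i \<Rightarrow> complex mat)"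
where
  "box_mixed I dA J dB a = mm_smult (1 / of_nat (mm_dim J dB)) (box_one I dA J dB a)"

lemma box_mixed_carrier: "box_mixed I dA J dB a \<in> mm_carrier (J \<times> I) (hom_dim dA dB)"
  by (simp add: box_mixed_def mm_smult_carrier box_one_carrier)

lemma box_mixed_entry:
  "j \<in> J \<Longrightarrow> i \<in> I \<Longrightarrow> r < hom_dim dA dB (j, i) \<Longrightarrow> s < hom_dim dA dB (j, i) \<Longrightarrow>
   box_mixed I dA J dB a (j, i) $$ (r, s) = 1 / of_nat (mm_dim J dB) *
     (if r div dA i = s div dA i then a i $$ (r mod dA i, s mod dA i) else 0)"
  by (simp add: box_mixed_def mm_smult_def box_one_apply kron_id_entry hom_dim_def)

lemma box_mixed_linear: "mm_linear I dA (J \<times> I) (hom_dim dA dB) (box_mixed I dA J dB)"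
  unfolding mm_linear_def
proof (intro conjI ballI allI box_mixed_carrier)
  fix X Y assume X: "X \<in> mm_carrier I dA" and Y: "Y \<in> mm_carrier I dA"
  show "box_mixed I dA J dB (mm_add X Y) = mm_add (box_mixed I dA J dB X) (box_mixed I dA J dB Y)"
    by (intro mm_eqI[OF box_mixed_carrier mm_add_carrier[OF box_mixed_carrier box_mixed_carrier]])
      (auto simp: box_mixed_entry mm_add_entry[OF box_mixed_carrier box_mixed_carrier]
        mm_add_entry[OF X Y] hom_mod_less add_divide_distrib)
next
  fix c X assume X: "X \<in> mm_carrier I dA"
  show "box_mixed I dA J dB (mm_smult c X) = mm_smult c (box_mixed I dA J dB X)"
    by (intro mm_eqI[OF box_mixed_carrier mm_smult_carrier[OF box_mixed_carrier]])
      (auto simp: box_mixed_entry mm_smult_entry[OF box_mixed_carrier]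
        mm_smult_entry[OF X] hom_mod_less)
qed

lemma hom_ptrace_box_mixed:
  assumes "mm_valid J dB" and a: "a \<in> mm_carrier I dA"
  shows "hom_ptrace I dA J dB (box_mixed I dA J dB a) = a"
proof (rule mm_eqI[OF hom_ptrace_carrier a])
  fix i q q' assume "i \<in> I" "q < dA i" "q' < dA i"
  then have "hom_ptrace I dA J dB (box_mixed I dA J dB a) i $$ (q, q') =
      (\<Sum>j\<in>J. of_nat (dB j) * (1 / of_nat (mm_dim J dB) * a i $$ (q, q')))"
    by (simp add: hom_ptrace_entry box_mixed_entry hom_index_less cong: sum.cong_simp)
  also have "\<dots> = of_nat (mm_dim J dB) * (1 / of_nat (mm_dim J dB) * a i $$ (q, q'))"
    by (simp only: mm_dim_def of_nat_sum sum_distrib_right)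
  also have "\<dots> = a i $$ (q, q')"
    using mm_dim_pos[OF assms(1)] by simp
  finally show "hom_ptrace I dA J dB (box_mixed I dA J dB a) i $$ (q, q') = a i $$ (q, q')" .
qed

lemma box_one_mm_one: "box_one I dA J dB (mm_one I dA) = mm_one (J \<times> I) (hom_dim dA dB)"
proof (rule mm_eqI[OF box_one_carrier mm_one_carrier])
  fix b r s assume "b \<in> J \<times> I" "r < hom_dim dA dB b" "s < hom_dim dA dB b"
  then obtain j i where "b = (j, i)" "j \<in> J" "i \<in> I" "r < dB j * dA i" "s < dB j * dA i"
    by (auto simp: hom_dim_def)
  moreover have "r div n = s div n \<and> r mod n = s mod n \<longleftrightarrow> r = s" for n :: nat
    by (metis div_mult_mod_eq)
  ultimately show "box_one I dA J dB (mm_one I dA) b $$ (r, s) = mm_one (J \<times> I) (hom_dim dA dB) b $$ (r, s)"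
    by (auto simp: box_one_apply kron_id_entry mm_one_entry mod_less_if_less_mult hom_dim_def)
qed

lemma box_mixed_mm_one:
  "box_mixed I dA J dB (mm_one I dA) = mm_smult (1 / of_nat (mm_dim J dB)) (mm_one (J \<times> I) (hom_dim dA dB))"
  by (simp add: box_mixed_def box_one_mm_one)

lemma hom_ptrace_mm_one:
  "hom_ptrace I dA J dB (mm_one (J \<times> I) (hom_dim dA dB)) = mm_smult (of_nat (mm_dim J dB)) (mm_one I dA)"
proof (rule mm_eqI[OF hom_ptrace_carrier mm_smult_carrier[OF mm_one_carrier]])
  fix i q q' assume "i \<in> I" "q < dA i" "q' < dA i"
  then show "hom_ptrace I dA J dB (mm_one (J \<times> I) (hom_dim dA dB)) i $$ (q, q') =
      mm_smult (of_nat (mm_dim J dB)) (mm_one I dA) i $$ (q, q')"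
    by (simp add: hom_ptrace_entry mm_one_entry hom_index_less mm_smult_entry[OF mm_one_carrier]
        mm_dim_def cong: sum.cong_simp)
qed

lemma hom_TP_shift:
  assumes H: "H \<in> mm_carrier (J \<times> I) (hom_dim dA dB)" and ker: "hom_ptrace I dA J dB H = mm_zero I dA"
    and acm: "a * c * real (mm_dim J dB) = 1"
  shows "hom_TP I dA J dB (mm_smult (of_real a) (mm_add H (mm_smult (of_real c) (mm_one (J \<times> I) (hom_dim dA dB)))))"
proof -
  let ?m = "mm_smult (of_nat (mm_dim J dB)) (mm_one I dA)"
  have m1: "?m \<in> mm_carrier I dA"
    by (rule mm_smult_carrier[OF mm_one_carrier])
  have cm1: "mm_smult (of_real c) ?m \<in> mm_carrier I dA"
    by (rule mm_smult_carrier[OF m1])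
  have acm': "complex_of_real a * (complex_of_real c * of_nat (mm_dim J dB)) = 1"
    using acm by (metis mult.assoc of_real_1 of_real_mult of_real_of_nat_eq)
  have "hom_ptrace I dA J dB (mm_smult (of_real a) (mm_add H (mm_smult (of_real c) (mm_one (J \<times> I) (hom_dim dA dB)))))
      = mm_smult (of_real a) (mm_add (mm_zero I dA) (mm_smult (of_real c) ?m))"
    by (simp add: H ker hom_ptrace_add hom_ptrace_smult hom_ptrace_mm_one mm_one_carrier
        mm_smult_carrier mm_add_carrier)
  also have "\<dots> = mm_one I dA"
    using acm'
    by (intro mm_eqI[OF mm_smult_carrier[OF mm_add_carrier[OF mm_zero_carrier cm1]] mm_one_carrier])
      (simp add: mm_smult_entry[OF mm_add_carrier[OF mm_zero_carrier cm1]]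
        mm_add_entry[OF mm_zero_carrier cm1] mm_smult_entry[OF m1] mm_smult_entry[OF mm_one_carrier]
        mm_zero_entry mm_one_entry)
  finally show ?thesis
    by (simp add: hom_TP_iff_ptrace)
qed

lemma box_mixed_mm_one_pos:
  "mm_pos (J \<times> I) (hom_dim dA dB) (box_mixed I dA J dB (mm_one I dA))"
  using mm_pos_smult_one[of "1 / real (mm_dim J dB)" "J \<times> I" "hom_dim dA dB"]
  by (simp add: box_mixed_mm_one)

lemma box_mixed_mm_one_TP:
  "mm_valid J dB \<Longrightarrow> hom_TP I dA J dB (box_mixed I dA J dB (mm_one I dA))"
  by (simp add: hom_TP_iff_ptrace hom_ptrace_box_mixed mm_one_carrier)

lemma mm_ampl_box_mixed_entry:
  assumes "j \<in> J" and "i \<in> I" and "0 < dA i"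
    and "r < n * (dB j * dA i)" and "s < n * (dB j * dA i)"
  shows "mm_ampl I dA (J \<times> I) (hom_dim dA dB) n (box_mixed I dA J dB) Y (j, i) $$ (r, s) =
    1 / of_nat (mm_dim J dB) * (if r mod (dB j * dA i) div dA i = s mod (dB j * dA i) div dA i
      then Y i $$ (r div (dB j * dA i) * dA i + r mod dA i, s div (dB j * dA i) * dA i + s mod dA i)
      else 0)"
proof -
  let ?h = "dB j * dA i"
  have "0 < ?h"
    using assms by (cases "?h = 0") simp_all
  then have "r mod ?h < hom_dim dA dB (j, i)" "s mod ?h < hom_dim dA dB (j, i)"
    by (simp_all add: hom_dim_def)
  moreover have "x mod ?h mod dA i = x mod dA i" for x
    by (simp add: mod_mod_cancel)
  ultimately show ?thesis
    using assms by (simp add: mm_ampl_entry hom_dim_def box_mixed_entry mm_block_entry)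
qed

lemma box_mixed_CP:
  assumes "mm_valid I dA"
  shows "mm_CP I dA (J \<times> I) (hom_dim dA dB) (box_mixed I dA J dB)"
  unfolding mm_CP_def
proof (intro conjI box_mixed_linear allI impI)
  fix n Y assume Y: "mm_pos I (\<lambda>i. n * dA i) Y"
  let ?T = "mm_ampl I dA (J \<times> I) (hom_dim dA dB) n (box_mixed I dA J dB) Y"
  show "mm_pos (J \<times> I) (\<lambda>b. n * hom_dim dA dB b) ?T"
    unfolding mm_pos_def
  proof (intro conjI mm_ampl_carrier ballI)
    fix b assume "b \<in> J \<times> I"
    then obtain j i where b: "b = (j, i)" and j: "j \<in> J" and i: "i \<in> I"
      by blast
    define d where "d = dA i"
    define h where "h = dB j * d"
    have "0 < d"
      using assms i by (simp add: mm_valid_def d_def)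
    have hb: "hom_dim dA dB b = h"
      by (simp add: b hom_dim_def h_def d_def)
    \<comment> \<open>\<open>g\<close> reads off the \<open>K\<^sub>j\<close>-digit of an index of \<open>C\<^sup>n \<otimes> K\<^sub>j \<otimes> H\<^sub>i\<close>, and \<open>\<phi>\<close> deletes it\<close>
    define g where "g r = r mod h div d" for r
    define \<phi> where "\<phi> r = r div h * d + r mod d" for r
    have "psd_mat (n * h) (?T b)"
    proof (rule psd_mat_sum_pullbacks[where P = "{..<dB j}" and D = "\<lambda>p. {r. g r = p}"
          and N = "\<lambda>_. n * d" and Y = "\<lambda>_. Y i" and \<phi> = "\<lambda>_. \<phi>" and c = "1 / real (mm_dim J dB)"])
      show "psd_mat (n * d) (Y i)"
        using Y i by (simp add: mm_pos_def d_def)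
      show "inj_on \<phi> ({r. g r = p} \<inter> {..<n * h})" for p
        unfolding \<phi>_def g_def h_def using \<open>0 < d\<close>
        by (intro inj_on_subset[OF inj_on_drop_digit[of d "dB j" p]]) auto
      show "\<phi> ` ({r. g r = p} \<inter> {..<n * h}) \<subseteq> {..<n * d}" for p
        using \<open>0 < d\<close>
        by (auto simp: \<phi>_def less_mult_imp_div_less mult.commute[of n h] intro!: mult_add_less_mult)
      show "?T b \<in> carrier_mat (n * h) (n * h)"
        using mm_carrier_blockD[OF mm_ampl_carrier \<open>b \<in> J \<times> I\<close>, of I dA "hom_dim dA dB" n]
        by (simp add: hb)
      fix r s assume rs: "r < n * h" "s < n * h"
      then have "g r < dB j"
        by (simp add: g_def h_def less_mult_imp_div_less mod_less_if_less_mult)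
      with rs show "?T b $$ (r, s) = of_real (1 / real (mm_dim J dB)) *
          (\<Sum>p<dB j. if r \<in> {r. g r = p} \<and> s \<in> {r. g r = p} then Y i $$ (\<phi> r, \<phi> s) else 0)"
        using j i \<open>0 < d\<close>
        by (simp add: b mm_ampl_box_mixed_entry sum_if_both_eq g_def \<phi>_def h_def d_def)
    qed (simp_all add: sum_nonneg)
    then show "psd_mat (n * hom_dim dA dB b) (?T b)"
      by (simp add: hb)
  qed
qed

subsection \<open>Functionals normalised on channels\<close>

locale channel_normalised =
  fixes I :: "'i set" and dA :: "'i \<Rightarrow> nat" and J :: "'j set" and dB :: "'j \<Rightarrow> nat"
    and f :: "('j \<times> 'i \<Rightarrow> complex mat) \<Rightarrow> complex"
  assumes valid_in: "mm_valid I dA" and valid_out: "mm_valid J dB"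
    and add: "\<And>X Y. X \<in> mm_carrier (J \<times> I) (hom_dim dA dB) \<Longrightarrow> Y \<in> mm_carrier (J \<times> I) (hom_dim dA dB) \<Longrightarrow>
      f (mm_add X Y) = f X + f Y"
    and smult: "\<And>c X. X \<in> mm_carrier (J \<times> I) (hom_dim dA dB) \<Longrightarrow> f (mm_smult c X) = c * f X"
    and channel: "\<And>Z. mm_pos (J \<times> I) (hom_dim dA dB) Z \<Longrightarrow> hom_TP I dA J dB Z \<Longrightarrow> f Z = 1"
begin

lemma value_mm_one: "f (mm_one (J \<times> I) (hom_dim dA dB)) = of_nat (mm_dim J dB)"
proof -
  have "1 = f (box_mixed I dA J dB (mm_one I dA))"
    using channel[OF box_mixed_mm_one_pos box_mixed_mm_one_TP[OF valid_out]] by simp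
  also have "\<dots> = f (mm_one (J \<times> I) (hom_dim dA dB)) / of_nat (mm_dim J dB)"
    by (simp add: box_mixed_mm_one smult mm_one_carrier)
  finally show ?thesis
    using mm_dim_pos[OF valid_out] by simp
qed

lemma vanishes_on_hermitian_ptrace_kernel:
  assumes H: "mm_hermitian (J \<times> I) (hom_dim dA dB) H" and ker: "hom_ptrace I dA J dB H = mm_zero I dA"
  shows "f H = 0"
proof -
  let ?h = "hom_dim dA dB"
  have Hc: "H \<in> mm_carrier (J \<times> I) ?h"
    using H by (simp add: mm_hermitian_def)
  define m where "m = real (mm_dim J dB)"
  define c where "c = 1 + (\<Sum>b\<in>J \<times> I. \<Sum>r<?h b. \<Sum>s<?h b. cmod (H b $$ (r, s)))"
  define a where "a = 1 / (c * m)"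
  have "0 < m" "1 \<le> c"
    using mm_dim_pos[OF valid_out] by (simp_all add: m_def c_def sum_nonneg)
  then have "0 \<le> a" and acm: "a * c * m = 1"
    by (simp_all add: a_def)
  have "finite (J \<times> I)"
    using valid_in valid_out by (simp add: mm_valid_def)
  then have bound: "(\<Sum>r<?h b. \<Sum>s<?h b. cmod (H b $$ (r, s))) \<le> c" if "b \<in> J \<times> I" for b
    unfolding c_def using member_le_sum[OF that, of "\<lambda>b. \<Sum>r<?h b. \<Sum>s<?h b. cmod (H b $$ (r, s))"]
    by (simp add: sum_nonneg)
  let ?Z = "mm_smult (of_real a) (mm_add H (mm_smult (of_real c) (mm_one (J \<times> I) ?h)))"
  have "f ?Z = 1"
    using channel[OF mm_pos_hermitian_shift[OF H \<open>0 \<le> a\<close> bound] hom_TP_shift[OF Hc ker]] acm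
    by (simp add: m_def)
  moreover have "f ?Z = of_real a * f H + of_real (a * c * m)"
    by (simp add: Hc smult add value_mm_one mm_one_carrier mm_smult_carrier mm_add_carrier m_def
        algebra_simps)
  ultimately show "f H = 0"
    using acm \<open>0 < m\<close> \<open>1 \<le> c\<close> by (simp add: a_def)
qed

lemma vanishes_on_ptrace_kernel:
  assumes Y: "Y \<in> mm_carrier (J \<times> I) (hom_dim dA dB)" and ker: "hom_ptrace I dA J dB Y = mm_zero I dA"
  shows "f Y = 0"
proof -
  have "f (mm_re Y) = 0"
    by (rule vanishes_on_hermitian_ptrace_kernel[OF mm_re_hermitian[OF Y]])
      (simp add: hom_ptrace_mm_re Y ker mm_re_zero)
  moreover have "f (mm_im Y) = 0"
    by (rule vanishes_on_hermitian_ptrace_kernel[OF mm_im_hermitian[OF Y]])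
      (simp add: hom_ptrace_mm_im Y ker mm_im_zero)
  moreover have "f Y = f (mm_re Y) + \<i> * f (mm_im Y)"
  proof -
    have "f Y = f (mm_add (mm_re Y) (mm_smult \<i> (mm_im Y)))"
      by (simp only: mm_re_add_im[OF Y])
    then show ?thesis
      by (simp add: add smult Y mm_re_carrier mm_im_carrier mm_smult_carrier)
  qed
  ultimately show ?thesis
    by simp
qed

lemma factors_through_ptrace:
  assumes X: "X \<in> mm_carrier (J \<times> I) (hom_dim dA dB)"
  shows "f X = f (box_mixed I dA J dB (hom_ptrace I dA J dB X))"
proof -
  let ?E = "box_mixed I dA J dB (hom_ptrace I dA J dB X)"
  have nE: "mm_smult (-1) ?E \<in> mm_carrier (J \<times> I) (hom_dim dA dB)"
    by (rule mm_smult_carrier[OF box_mixed_carrier])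
  have "hom_ptrace I dA J dB (mm_add X (mm_smult (-1) ?E)) = mm_zero I dA"
    by (simp add: X nE box_mixed_carrier hom_ptrace_add hom_ptrace_smult
        hom_ptrace_box_mixed[OF valid_out hom_ptrace_carrier] mm_add_neg_self[OF hom_ptrace_carrier])
  then have "f (mm_add X (mm_smult (-1) ?E)) = 0"
    by (rule vanishes_on_ptrace_kernel[OF mm_add_carrier[OF X nE]])
  then show ?thesis
    by (simp add: X nE box_mixed_carrier add smult)
qed

end

subsection \<open>Deterministic supermaps\<close>

lemma det_supermap_channel_normalised:
  assumes "mm_valid I dA" "mm_valid J dB" "mm_valid K dC" "mm_valid L dD"
    and S: "det_supermap I dA J dB K dC L dD S" and \<rho>: "mm_pos K dC \<rho>" "mm_trace K \<rho> = 1"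
  shows "channel_normalised I dA J dB (\<lambda>X. mm_trace (L \<times> K) (mm_mult (box_one K dC L dD \<rho>) (S X)))"
proof
  have lin: "mm_linear (J \<times> I) (hom_dim dA dB) (L \<times> K) (hom_dim dC dD) S"
    using S by (simp add: det_supermap_def mm_CP_def)
  fix X Y c
  assume X: "X \<in> mm_carrier (J \<times> I) (hom_dim dA dB)" and Y: "Y \<in> mm_carrier (J \<times> I) (hom_dim dA dB)"
  then show "mm_trace (L \<times> K) (mm_mult (box_one K dC L dD \<rho>) (S (mm_add X Y))) =
      mm_trace (L \<times> K) (mm_mult (box_one K dC L dD \<rho>) (S X)) +
      mm_trace (L \<times> K) (mm_mult (box_one K dC L dD \<rho>) (S Y))"
    using lin by (simp add: mm_linear_def mm_trace_mult_add[OF box_one_carrier])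
  from X show "mm_trace (L \<times> K) (mm_mult (box_one K dC L dD \<rho>) (S (mm_smult c X))) =
      c * mm_trace (L \<times> K) (mm_mult (box_one K dC L dD \<rho>) (S X))"
    using lin by (simp add: mm_linear_def mm_trace_mult_smult[OF box_one_carrier])
next
  fix Z assume "mm_pos (J \<times> I) (hom_dim dA dB) Z" and "hom_TP I dA J dB Z"
  with S have SZ: "S Z \<in> mm_carrier (L \<times> K) (hom_dim dC dD)" "hom_ptrace K dC L dD (S Z) = mm_one K dC"
    by (auto simp: det_supermap_def mm_CP_def mm_linear_def mm_pos_def hom_TP_iff_ptrace)
  have \<rho>c: "\<rho> \<in> mm_carrier K dC"
    using \<rho> by (simp add: mm_pos_def)
  show "mm_trace (L \<times> K) (mm_mult (box_one K dC L dD \<rho>) (S Z)) = 1"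
    using assms SZ \<rho>c
    by (simp add: mm_trace_box_one_mult mm_trace_mult_one mm_valid_def)
qed (use assms in simp_all)

lemma det_supermap_dual_box_one:
  assumes valid: "mm_valid I dA" "mm_valid J dB" "mm_valid K dC" "mm_valid L dD"
    and S: "det_supermap I dA J dB K dC L dD S"
    and S_dual: "mm_dual (J \<times> I) (hom_dim dA dB) (L \<times> K) (hom_dim dC dD) S S_dual"
    and N_dual: "mm_dual I dA K dC (\<lambda>a. hom_ptrace K dC L dD (S (box_mixed I dA J dB a))) N_dual"
    and \<rho>: "mm_pos K dC \<rho>" "mm_trace K \<rho> = 1"
  shows "S_dual (box_one K dC L dD \<rho>) = box_one I dA J dB (N_dual \<rho>)"
proof -
  let ?f = "\<lambda>X. mm_trace (L \<times> K) (mm_mult (box_one K dC L dD \<rho>) (S X))"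
  interpret channel_normalised I dA J dB ?f
    by (rule det_supermap_channel_normalised[OF valid S \<rho>])
  have fin: "finite I" "finite J" "finite K" "finite L"
    using valid by (simp_all add: mm_valid_def)
  have \<rho>c: "\<rho> \<in> mm_carrier K dC"
    using \<rho> by (simp add: mm_pos_def)
  have S_carrier: "S X \<in> mm_carrier (L \<times> K) (hom_dim dC dD)" if "X \<in> mm_carrier (J \<times> I) (hom_dim dA dB)" for X
    using S that by (simp add: det_supermap_def mm_CP_def mm_linear_def)
  show ?thesis
  proof (rule mm_eq_if_trace_mult_eq[OF _ box_one_carrier])
    show "S_dual (box_one K dC L dD \<rho>) \<in> mm_carrier (J \<times> I) (hom_dim dA dB)"
      using S_dual box_one_carrier[of K dC L dD \<rho>] by (simp add: mm_dual_def)
    show "finite (J \<times> I)"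
      using fin by simp
    fix X assume X: "X \<in> mm_carrier (J \<times> I) (hom_dim dA dB)"
    have "mm_trace (J \<times> I) (mm_mult (S_dual (box_one K dC L dD \<rho>)) X) = ?f X"
      using S_dual X box_one_carrier[of K dC L dD \<rho>] by (simp add: mm_dual_def)
    also have "\<dots> = ?f (box_mixed I dA J dB (hom_ptrace I dA J dB X))"
      by (rule factors_through_ptrace[OF X])
    also have "\<dots> = mm_trace K (mm_mult \<rho> (hom_ptrace K dC L dD
        (S (box_mixed I dA J dB (hom_ptrace I dA J dB X)))))"
      using fin \<rho>c by (simp add: mm_trace_box_one_mult S_carrier box_mixed_carrier)
    also have "\<dots> = mm_trace I (mm_mult (N_dual \<rho>) (hom_ptrace I dA J dB X))"
      using N_dual \<rho>c hom_ptrace_carrier[of I dA J dB X] by (simp add: mm_dual_def)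
    also have "\<dots> = mm_trace (J \<times> I) (mm_mult (box_one I dA J dB (N_dual \<rho>)) X)"
      using N_dual \<rho>c fin X by (simp add: mm_dual_def mm_trace_box_one_mult)
    finally show "mm_trace (J \<times> I) (mm_mult (S_dual (box_one K dC L dD \<rho>)) X) =
        mm_trace (J \<times> I) (mm_mult (box_one I dA J dB (N_dual \<rho>)) X)" .
  qed
qed

theorem lemma3p3:
  fixes I :: "'a set" and dA :: "'a \<Rightarrow> nat"
    and J :: "'b set" and dB :: "'b \<Rightarrow> nat"
    and K :: "'c set" and dC :: "'c \<Rightarrow> nat"
    and L :: "'d set" and dD :: "'d \<Rightarrow> nat"
    and S :: "('b \<times> 'a \<Rightarrow> complex mat) \<Rightarrow> ('d \<times> 'c \<Rightarrow> complex mat)"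
  assumes "mm_valid I dA" and "mm_valid J dB" and "mm_valid K dC" and "mm_valid L dD"
    and "det_supermap I dA J dB K dC L dD S"
  shows "\<exists>N :: ('a \<Rightarrow> complex mat) \<Rightarrow> ('c \<Rightarrow> complex mat).
           mm_CP I dA K dC N \<and> mm_unital I dA K dC N \<and>
           (\<forall>S_dual N_dual.
              mm_dual (J \<times> I) (hom_dim dA dB) (L \<times> K) (hom_dim dC dD) S S_dual \<longrightarrow>
              mm_dual I dA K dC N N_dual \<longrightarrow>
              (\<forall>\<rho>. mm_pos K dC \<rho> \<and> mm_trace K \<rho> = 1 \<longrightarrow>
                 S_dual (box_one K dC L dD \<rho>) = box_one I dA J dB (N_dual \<rho>)))"
proof (intro exI conjI allI impI)
  let ?N = "\<lambda>a. hom_ptrace K dC L dD (S (box_mixed I dA J dB a))"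
  have S_CP: "mm_CP (J \<times> I) (hom_dim dA dB) (L \<times> K) (hom_dim dC dD) S"
    using assms(5) by (simp add: det_supermap_def)
  show "mm_CP I dA K dC ?N"
    using mm_CP_comp[OF mm_CP_comp[OF box_mixed_CP[OF assms(1)] S_CP] hom_ptrace_CP[OF assms(3)]] assms(4)
    by (simp add: mm_valid_def)
  show "mm_unital I dA K dC ?N"
    using assms(5) box_mixed_mm_one_pos[of J I dA dB] box_mixed_mm_one_TP[OF assms(2), of I dA]
    by (simp add: mm_unital_def det_supermap_def hom_TP_iff_ptrace)
  show "S_dual (box_one K dC L dD \<rho>) = box_one I dA J dB (N_dual \<rho>)"
    if "mm_dual (J \<times> I) (hom_dim dA dB) (L \<times> K) (hom_dim dC dD) S S_dual"
      and "mm_dual I dA K dC ?N N_dual" and "mm_pos K dC \<rho> \<and> mm_trace K \<rho> = 1"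
    for S_dual N_dual \<rho>
    using that by (intro det_supermap_dual_box_one[OF assms]) simp_all
qed

end
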